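(* Let $\mathcal{A}=\mathbb{C}\setminus(-\infty,0]$ and let $H$ be the principal branch on $\mathcal{A}$ given by $H(z)=\ln\frac{z(1+z)}{1+z^2}\big/\ln\frac{1+z^2}{1+z}$ for $z\ne1$ and $H(1)=1$ (principal logarithm, $-\pi<\arg<\pi$). For $z=re^{i\theta}\in\mathcal{A}$, the function $zH(z)$ tends to $0$ as $r\to\infty$, uniformly in $\theta$.
   Context: $H$ is the holomorphic extension to $\mathcal{A}$ of $H(x)=\frac{\ln x}{\ln(x^2+1)-\ln(x+1)}-1$, $x\in(0,\infty)$. *)

theory Defs
  imports "HOL-Analysis.Analysis"
begin

definition slitA :: "complex set" where
  "slitA = - {z. Im z = 0 \<and> Re z \<le> 0}"

definition H :: "complex \<Rightarrow> complex" where
  "H z = (if z = 1 then 1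
          else Ln (z * (1 + z) / (1 + z\<^sup>2)) / Ln ((1 + z\<^sup>2) / (1 + z)))"

end

theory Submission
  imports Defs
begin

text \<open>For large \<open>|z|\<close> the numerator of \<open>H z\<close> is \<open>Ln (1 + d)\<close> with \<open>|d| \<le> 1/(|z| - 1)\<close>,
  hence of size \<open>O(1/|z|)\<close>, while the denominator has modulus at least \<open>ln (|z| - 1)\<close>.
  So \<open>|z H z| \<le> 4 / ln (|z| - 1)\<close>, a bound that does not depend on \<open>arg z\<close>.\<close>

lemma norm_Ln_ge_ln_norm:
  fixes w :: complex
  assumes "w \<noteq> 0"
  shows "ln (norm w) \<le> norm (Ln w)"
  using assms complex_Re_le_cmod[of "Ln w"] by simp

lemma norm_one_plus_square_ge:
  fixes z :: complex
  shows "norm z ^ 2 - 1 \<le> norm (1 + z\<^sup>2)"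
  using norm_triangle_ineq4[of "1 + z\<^sup>2" 1] by (simp add: norm_power)

lemma H_numerator_eq:
  fixes z :: complex
  assumes "1 + z\<^sup>2 \<noteq> 0"
  shows "z * (1 + z) / (1 + z\<^sup>2) = 1 + (z - 1) / (1 + z\<^sup>2)"
  using assms by (simp add: field_simps power2_eq_square)

lemma norm_H_numerator_deviation_le:
  fixes z :: complex
  assumes "norm z > 1"
  shows "norm ((z - 1) / (1 + z\<^sup>2)) \<le> 1 / (norm z - 1)"
proof -
  define r where "r = norm z"
  have factor: "r\<^sup>2 - 1 = (r - 1) * (r + 1)" by (simp add: algebra_simps power2_eq_square)
  have "norm (z - 1) \<le> r + 1" using norm_triangle_ineq4[of z 1] by (simp add: r_def)
  moreover have "r\<^sup>2 - 1 \<le> norm (1 + z\<^sup>2)" using norm_one_plus_square_ge by (simp add: r_def)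
  moreover have "r\<^sup>2 - 1 > 0" using assms factor by (simp add: r_def)
  ultimately have "norm ((z - 1) / (1 + z\<^sup>2)) \<le> (r + 1) / (r\<^sup>2 - 1)"
    unfolding norm_divide using assms by (intro frac_le) (auto simp: r_def)
  also have "\<dots> = 1 / (norm z - 1)" using factor assms by (simp add: r_def)
  finally show ?thesis .
qed

lemma norm_H_denominator_ge:
  fixes z :: complex
  assumes "norm z > 1"
  shows "norm z - 1 \<le> norm ((1 + z\<^sup>2) / (1 + z))"
proof -
  define r where "r = norm z"
  have factor: "r\<^sup>2 - 1 = (r - 1) * (r + 1)" by (simp add: algebra_simps power2_eq_square)
  have "norm (1 + z) \<le> r + 1" using norm_triangle_ineq[of 1 z] by (simp add: r_def)
  moreover have "r\<^sup>2 - 1 \<le> norm (1 + z\<^sup>2)" using norm_one_plus_square_ge by (simp add: r_def)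
  moreover have "1 + z \<noteq> 0"
    using assms by (metis add_eq_0_iff norm_minus_cancel norm_one less_irrefl)
  ultimately have "(r\<^sup>2 - 1) / (r + 1) \<le> norm ((1 + z\<^sup>2) / (1 + z))"
    unfolding norm_divide using assms factor r_def by (intro frac_le) auto
  moreover have "(r\<^sup>2 - 1) / (r + 1) = norm z - 1" using factor assms by (simp add: r_def)
  ultimately show ?thesis by simp
qed

lemma norm_mult_H_le:
  fixes z :: complex
  assumes "norm z > 3"
  shows "cmod (z * H z) \<le> 4 / ln (norm z - 1)"
proof -
  define r where "r = norm z"
  define d where "d = (z - 1) / (1 + z\<^sup>2)"
  define w where "w = (1 + z\<^sup>2) / (1 + z)"
  have r3: "r > 3" using assms by (simp add: r_def)
  have "0 < r\<^sup>2 - 1" using r3 by (simp add: power2_eq_square less_1_mult)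
  hence "1 + z\<^sup>2 \<noteq> 0" using norm_one_plus_square_ge[of z] by (auto simp: r_def)
  hence numerator: "z * (1 + z) / (1 + z\<^sup>2) = 1 + d" by (simp add: d_def H_numerator_eq)
  have d_le: "norm d \<le> 1 / (r - 1)"
    using norm_H_numerator_deviation_le r3 by (simp add: d_def r_def)
  also have "\<dots> < 1/2" using r3 by (simp add: field_simps)
  finally have "norm (Ln (1 + d)) \<le> 2 * norm d" by (rule norm_Ln_le)
  hence Ln_numerator: "norm (Ln (1 + d)) \<le> 2 / (r - 1)" using d_le by simp
  have w_ge: "r - 1 \<le> norm w" using norm_H_denominator_ge r3 by (simp add: w_def r_def)
  have ln_pos: "ln (r - 1) > 0" using r3 by simp
  have "ln (r - 1) \<le> ln (norm w)" using w_ge r3 by (intro ln_mono) auto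
  also have "\<dots> \<le> norm (Ln w)" using w_ge r3 by (intro norm_Ln_ge_ln_norm) auto
  finally have Ln_denominator: "ln (r - 1) \<le> norm (Ln w)" .
  have "z \<noteq> 1" using r3 by (auto simp: r_def)
  hence "cmod (z * H z) = r * norm (Ln (1 + d)) / norm (Ln w)"
    using numerator by (simp add: H_def w_def r_def norm_mult norm_divide)
  also have "\<dots> \<le> r * (2 / (r - 1)) / ln (r - 1)"
    using Ln_numerator Ln_denominator ln_pos r3 by (intro frac_le mult_left_mono) simp_all
  also have "\<dots> \<le> 4 / ln (r - 1)"
    using ln_pos r3 by (intro divide_right_mono) (auto simp: field_simps)
  finally show ?thesis by (simp add: r_def)
qed

theorem lemma4p2:
  shows "\<forall>\<epsilon>>0. \<exists>R. \<forall>r \<theta>. r > R \<and> - pi < \<theta> \<and> \<theta> < pi \<longrightarrow>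
           cmod (complex_of_real r * exp (\<i> * complex_of_real \<theta>)
                 * H (complex_of_real r * exp (\<i> * complex_of_real \<theta>))) < \<epsilon>"
proof (intro allI impI)
  fix e :: real
  assume e: "e > 0"
  let ?R = "max 3 (1 + exp (4 / e))"
  have "cmod (z * H z) < e" if "norm z > ?R" for z :: complex
  proof -
    have "exp (4 / e) < norm z - 1" and "norm z > 1" using that by simp_all
    hence "4 / e < ln (norm z - 1)"
      using ln_less_cancel_iff[of "exp (4 / e)" "norm z - 1"] by simp
    moreover have "0 < 4 / e" using e by simp
    ultimately have "0 < ln (norm z - 1)" and "4 < e * ln (norm z - 1)"
      using e by (linarith, simp add: field_simps)
    hence "4 / ln (norm z - 1) < e" by (simp add: field_simps mult.commute)
    with norm_mult_H_le[of z] that show ?thesis by simp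
  qed
  moreover have "norm (complex_of_real r * exp (\<i> * complex_of_real \<theta>)) = r" if "r > ?R" for r \<theta>
    using that by (simp add: norm_mult)
  ultimately show "\<exists>R. \<forall>r \<theta>. r > R \<and> - pi < \<theta> \<and> \<theta> < pi \<longrightarrow>
           cmod (complex_of_real r * exp (\<i> * complex_of_real \<theta>)
                 * H (complex_of_real r * exp (\<i> * complex_of_real \<theta>))) < e"
    by (intro exI[of _ ?R]) (metis max.strict_boundedE)
qed

end
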